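(* Let $H=T\cup C_n$ be a Halin graph whose outer cycle $C_n$ has even length $n$. Then $AT(H)=3$.
   Context: All graphs are finite and simple. A Halin graph $H=T\cup C_n$ is a plane graph obtained from a plane tree $T$ having no vertex of degree two and at least one vertex of degree at least three, by adding a cycle $C_n$ (the outer cycle) that connects all the leaves of $T$ in the cyclic order determined by the planar drawing of $T$. For a digraph $D$, an Eulerian subdigraph is a spanning subdigraph (a subset of the arcs, possibly empty) in which every vertex has indegree equal to outdegree; it is even or odd according to the parity of its number of arcs. The Alon–Tarsi number $AT(G)$ is the smallest integer $k$ such that $G$ has an orientation $D$ with maximum outdegree at most $k-1$ for which the numbers of even and odd Eulerian subdigraphs of $D$ differ. *)

theory Defs
  imports Main
begin

definition simple_graph :: "'a set \<Rightarrow> 'a set set \<Rightarrow> bool" where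
  "simple_graph V E \<longleftrightarrow> finite V \<and> (\<forall>e\<in>E. \<exists>u v. e = {u, v} \<and> u \<noteq> v \<and> u \<in> V \<and> v \<in> V)"

definition nbrs :: "'a set set \<Rightarrow> 'a \<Rightarrow> 'a set" where
  "nbrs E v = {u. {v, u} \<in> E}"

definition degree :: "'a set set \<Rightarrow> 'a \<Rightarrow> nat" where
  "degree E v = card (nbrs E v)"

definition adj_rel :: "'a set set \<Rightarrow> ('a \<times> 'a) set" where
  "adj_rel E = {(u, v). {u, v} \<in> E}"

definition connected_graph :: "'a set \<Rightarrow> 'a set set \<Rightarrow> bool" where
  "connected_graph V E \<longleftrightarrow> (\<forall>u\<in>V. \<forall>v\<in>V. (u, v) \<in> (adj_rel E)\<^sup>*)"

definition is_tree :: "'a set \<Rightarrow> 'a set set \<Rightarrow> bool" where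
  "is_tree V E \<longleftrightarrow> simple_graph V E \<and> V \<noteq> {} \<and> connected_graph V E \<and> card E = card V - 1"

definition leaves :: "'a set \<Rightarrow> 'a set set \<Rightarrow> 'a set" where
  "leaves V E = {v \<in> V. degree E v = 1}"

text \<open>A planar drawing of a tree is determined (up to homeomorphism) by a rotation system:
  at every vertex v a cyclic permutation rot v of the neighbours of v.\<close>

definition rotation_system :: "'a set \<Rightarrow> 'a set set \<Rightarrow> ('a \<Rightarrow> 'a \<Rightarrow> 'a) \<Rightarrow> bool" where
  "rotation_system V E rot \<longleftrightarrow>
     (\<forall>v\<in>V. bij_betw (rot v) (nbrs E v) (nbrs E v) \<and>
             (\<forall>u\<in>nbrs E v. \<forall>w\<in>nbrs E v. \<exists>k. (rot v ^^ k) u = w))"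

text \<open>Face-tracing successor on darts (u,v): continue from v along the next edge in the rotation at v.
  Since a plane tree has a single face, iterating this traces the boundary of the drawing.\<close>

definition face_succ :: "('a \<Rightarrow> 'a \<Rightarrow> 'a) \<Rightarrow> 'a \<times> 'a \<Rightarrow> 'a \<times> 'a" where
  "face_succ rot d = (snd d, rot (snd d) (fst d))"

text \<open>Leaf m is the next leaf after leaf l in the cyclic order given by the drawing:
  it is the first leaf reached by the boundary walk starting with the dart leaving l.\<close>

definition next_leaf :: "'a set \<Rightarrow> 'a set set \<Rightarrow> ('a \<Rightarrow> 'a \<Rightarrow> 'a) \<Rightarrow> 'a \<Rightarrow> 'a \<Rightarrow> bool" where
  "next_leaf V E rot l m \<longleftrightarrow> l \<in> leaves V E \<and>
     (\<exists>u k. nbrs E l = {u} \<and> snd ((face_succ rot ^^ k) (l, u)) = m \<and> m \<in> leaves V E \<and>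
            (\<forall>j<k. snd ((face_succ rot ^^ j) (l, u)) \<notin> leaves V E))"

definition outer_cycle_edges :: "'a set \<Rightarrow> 'a set set \<Rightarrow> ('a \<Rightarrow> 'a \<Rightarrow> 'a) \<Rightarrow> 'a set set" where
  "outer_cycle_edges V E rot = {{l, m} | l m. next_leaf V E rot l m}"

definition halin_tree :: "'a set \<Rightarrow> 'a set set \<Rightarrow> ('a \<Rightarrow> 'a \<Rightarrow> 'a) \<Rightarrow> bool" where
  "halin_tree V T rot \<longleftrightarrow> is_tree V T \<and> rotation_system V T rot \<and>
     (\<forall>v\<in>V. degree T v \<noteq> 2) \<and> (\<exists>v\<in>V. degree T v \<ge> 3)"

definition halin_edges :: "'a set \<Rightarrow> 'a set set \<Rightarrow> ('a \<Rightarrow> 'a \<Rightarrow> 'a) \<Rightarrow> 'a set set" where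
  "halin_edges V T rot = T \<union> outer_cycle_edges V T rot"

definition orientation :: "'a set \<Rightarrow> 'a set set \<Rightarrow> ('a \<times> 'a) set \<Rightarrow> bool" where
  "orientation V E D \<longleftrightarrow> (\<forall>(u, v)\<in>D. {u, v} \<in> E) \<and>
     (\<forall>u v. {u, v} \<in> E \<longrightarrow> ((u, v) \<in> D \<longleftrightarrow> (v, u) \<notin> D))"

definition outdeg :: "('a \<times> 'a) set \<Rightarrow> 'a \<Rightarrow> nat" where
  "outdeg D v = card {w. (v, w) \<in> D}"

definition indeg :: "('a \<times> 'a) set \<Rightarrow> 'a \<Rightarrow> nat" where
  "indeg D v = card {w. (w, v) \<in> D}"

definition eulerian_sub :: "('a \<times> 'a) set \<Rightarrow> ('a \<times> 'a) set \<Rightarrow> bool" where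
  "eulerian_sub D S \<longleftrightarrow> S \<subseteq> D \<and> (\<forall>v. indeg S v = outdeg S v)"

definition even_eulerian :: "('a \<times> 'a) set \<Rightarrow> nat" where
  "even_eulerian D = card {S. eulerian_sub D S \<and> even (card S)}"

definition odd_eulerian :: "('a \<times> 'a) set \<Rightarrow> nat" where
  "odd_eulerian D = card {S. eulerian_sub D S \<and> odd (card S)}"

definition AT_number :: "'a set \<Rightarrow> 'a set set \<Rightarrow> nat" where
  "AT_number V E = (LEAST k. \<exists>D. orientation V E D \<and> (\<forall>v\<in>V. outdeg D v + 1 \<le> k) \<and>
                                even_eulerian D \<noteq> odd_eulerian D)"

end

theory Submission
  imports Defs
begin

text \<open>
  A Halin graph with vertex set V and leaf set L has |V| - 1 + |L| > |V| edges, so every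
  orientation has a vertex of outdegree at least 2, and AT(H) \<ge> 3. For the upper bound orient
  the tree towards an internal root and the outer cycle cyclically. Tree arcs strictly decrease a
  potential and never enter a leaf, so no Eulerian subdigraph uses a tree arc; the Eulerian
  subdigraphs are therefore the empty one and the outer cycle, both even when |L| is even.
  The combinatorial core is that tracing the single face of a plane tree visits every dart,
  which makes the successor relation on leaves a cyclic permutation, i.e. the outer edges
  really form one cycle.
\<close>

lemma simple_graph_edgeE:
  assumes "simple_graph V E" "e \<in> E"
  obtains u v where "e = {u, v}" "u \<noteq> v" "u \<in> V" "v \<in> V"
  using assms unfolding simple_graph_def by blast

lemma simple_graph_edge_ends:
  assumes "simple_graph V E" "{x, y} \<in> E"
  shows "x \<noteq> y" "x \<in> V" "y \<in> V"
proof -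
  obtain u v where "{x, y} = {u, v}" "u \<noteq> v" "u \<in> V" "v \<in> V"
    using assms by (rule simple_graph_edgeE)
  then show "x \<noteq> y" "x \<in> V" "y \<in> V"
    by (auto simp: doubleton_eq_iff)
qed

lemma simple_graph_finite_vertices: "simple_graph V E \<Longrightarrow> finite V"
  unfolding simple_graph_def by blast

lemma simple_graph_finite_edges:
  assumes "simple_graph V E"
  shows "finite E"
proof (rule finite_subset)
  show "E \<subseteq> Pow V"
    using assms unfolding simple_graph_def by fastforce
  show "finite (Pow V)"
    using simple_graph_finite_vertices[OF assms] by simp
qed

lemma simple_graph_card_ge_2:
  assumes sg: "simple_graph V E" and e: "{x, y} \<in> E"
  shows "2 \<le> card V"
proof -
  have "{x, y} \<subseteq> V" "card {x, y} = 2"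
    using simple_graph_edge_ends[OF sg e] by auto
  then show ?thesis
    using card_mono[OF simple_graph_finite_vertices[OF sg], of "{x, y}"] by simp
qed

lemma mem_nbrs_iff: "y \<in> nbrs E x \<longleftrightarrow> {x, y} \<in> E"
  unfolding nbrs_def by simp

lemma nbrs_sym: "x \<in> nbrs E y \<longleftrightarrow> y \<in> nbrs E x"
  by (simp add: mem_nbrs_iff insert_commute)

lemma nbrs_subset: "simple_graph V E \<Longrightarrow> nbrs E v \<subseteq> V"
  by (auto simp: mem_nbrs_iff dest: simple_graph_edge_ends)

lemma finite_nbrs: "simple_graph V E \<Longrightarrow> finite (nbrs E v)"
  by (rule finite_subset[OF nbrs_subset simple_graph_finite_vertices])

lemma self_notin_nbrs: "simple_graph V E \<Longrightarrow> v \<notin> nbrs E v"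
  using simple_graph_edge_ends(1)[of V E v v] by (auto simp: mem_nbrs_iff)

lemma adj_rel_iff: "(x, y) \<in> adj_rel E \<longleftrightarrow> y \<in> nbrs E x"
  unfolding adj_rel_def nbrs_def by simp

definition darts :: "'a set set \<Rightarrow> ('a \<times> 'a) set" where
  "darts E = {(x, y). {x, y} \<in> E}"

lemma darts_eq_Sigma: "simple_graph V E \<Longrightarrow> darts E = Sigma V (nbrs E)"
  by (auto simp: darts_def mem_nbrs_iff dest: simple_graph_edge_ends)

lemma card_darts:
  assumes sg: "simple_graph V E"
  shows "card (darts E) = 2 * card E"
proof -
  let ?D = "\<lambda>e. {(x, y). {x, y} = e}"
  have two: "card (?D e) = 2" if "e \<in> E" for e
  proof -
    obtain a b where ab: "e = {a, b}" "a \<noteq> b"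
      using sg \<open>e \<in> E\<close> by (rule simple_graph_edgeE)
    then have "?D e = {(a, b), (b, a)}"
      by (auto simp: doubleton_eq_iff)
    then show ?thesis using ab by simp
  qed
  have fin: "finite (?D e)" if "e \<in> E" for e
    using two[OF that] by (simp add: card_ge_0_finite)
  have "darts E = (\<Union>e\<in>E. ?D e)"
    unfolding darts_def by blast
  also have "card \<dots> = (\<Sum>e\<in>E. card (?D e))"
    using simple_graph_finite_edges[OF sg] fin by (intro card_UN_disjoint) auto
  finally show ?thesis using two by simp
qed

lemma sum_degree_eq_twice_card_edges:
  assumes sg: "simple_graph V E"
  shows "(\<Sum>v\<in>V. degree E v) = 2 * card E"
proof -
  have "(\<Sum>v\<in>V. degree E v) = card (Sigma V (nbrs E))"
    using simple_graph_finite_vertices[OF sg] finite_nbrs[OF sg]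
    by (simp add: degree_def card_SigmaI)
  then show ?thesis
    using card_darts[OF sg] darts_eq_Sigma[OF sg] by simp
qed

lemma orientation_edge: "orientation V E D \<Longrightarrow> (x, y) \<in> D \<Longrightarrow> {x, y} \<in> E"
  unfolding orientation_def by blast

lemma orientation_arc_iff:
  "orientation V E D \<Longrightarrow> {x, y} \<in> E \<Longrightarrow> (x, y) \<in> D \<longleftrightarrow> (y, x) \<notin> D"
  unfolding orientation_def by blast

lemma orientation_subset_Times:
  assumes "simple_graph V E" "orientation V E D"
  shows "D \<subseteq> V \<times> V"
  using assms simple_graph_edge_ends orientation_edge by fastforce

lemma orientation_Un:
  assumes o: "orientation V E D" and o': "orientation V E' D'" and disj: "E \<inter> E' = {}"
  shows "orientation V (E \<union> E') (D \<union> D')"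
  unfolding orientation_def
proof (intro conjI allI impI)
  show "\<forall>(x, y)\<in>D \<union> D'. {x, y} \<in> E \<union> E'"
    using orientation_edge[OF o] orientation_edge[OF o'] by blast
next
  fix x y assume "{x, y} \<in> E \<union> E'"
  then consider "{x, y} \<in> E" "{x, y} \<notin> E'" | "{x, y} \<in> E'" "{x, y} \<notin> E"
    using disj by blast
  then show "(x, y) \<in> D \<union> D' \<longleftrightarrow> (y, x) \<notin> D \<union> D'"
  proof cases
    case 1
    then have "(x, y) \<notin> D'" "(y, x) \<notin> D'"
      using orientation_edge[OF o', of x y] orientation_edge[OF o', of y x] insert_commute[of y x "{}"]
      by auto
    then show ?thesis
      using orientation_arc_iff[OF o 1(1)] by blast
  next
    case 2
    then have "(x, y) \<notin> D" "(y, x) \<notin> D"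
      using orientation_edge[OF o, of x y] orientation_edge[OF o, of y x] insert_commute[of y x "{}"]
      by auto
    then show ?thesis
      using orientation_arc_iff[OF o' 2(1)] by blast
  qed
qed

lemma orientation_cycle:
  assumes "\<forall>l\<in>L. \<sigma> l \<in> L \<and> \<sigma> (\<sigma> l) \<noteq> l"
  shows "orientation V ((\<lambda>l. {l, \<sigma> l}) ` L) ((\<lambda>l. (l, \<sigma> l)) ` L)"
  unfolding orientation_def
proof (intro conjI allI impI)
  show "\<forall>(x, y)\<in>(\<lambda>l. (l, \<sigma> l)) ` L. {x, y} \<in> (\<lambda>l. {l, \<sigma> l}) ` L"
    by auto
next
  fix x y assume "{x, y} \<in> (\<lambda>l. {l, \<sigma> l}) ` L"
  then obtain l where l: "l \<in> L" and "{x, y} = {l, \<sigma> l}"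
    by auto
  then consider "x = l" "y = \<sigma> l" | "x = \<sigma> l" "y = l"
    by (auto simp: doubleton_eq_iff)
  moreover have "(l, \<sigma> l) \<in> (\<lambda>l. (l, \<sigma> l)) ` L" "(\<sigma> l, l) \<notin> (\<lambda>l. (l, \<sigma> l)) ` L"
    using assms l by auto
  ultimately show "(x, y) \<in> (\<lambda>l. (l, \<sigma> l)) ` L \<longleftrightarrow> (y, x) \<notin> (\<lambda>l. (l, \<sigma> l)) ` L"
    by cases auto
qed

lemma orientation_insert_pendant:
  assumes o: "orientation V T D" and l: "\<forall>e\<in>T. l \<notin> e" and ul: "u \<noteq> l"
  shows "orientation W (insert {l, u} T) (insert (l, u) D)"
  \<comment> \<open>the definition of orientation ignores its vertex-set argument, hence the free W\<close>
proof -
  have avoid: "x \<noteq> l" "y \<noteq> l" if "(x, y) \<in> D" for x y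
    using l orientation_edge[OF o that] by auto
  show ?thesis
    unfolding orientation_def
  proof (intro conjI allI impI)
    show "\<forall>(x, y)\<in>insert (l, u) D. {x, y} \<in> insert {l, u} T"
      using orientation_edge[OF o] by auto
  next
    fix x y assume e: "{x, y} \<in> insert {l, u} T"
    show "(x, y) \<in> insert (l, u) D \<longleftrightarrow> (y, x) \<notin> insert (l, u) D"
    proof (cases "{x, y} = {l, u}")
      case True
      then show ?thesis
        using ul avoid by (auto simp: doubleton_eq_iff)
    next
      case False
      then have "{x, y} \<in> T" "(x, y) \<noteq> (l, u)" "(y, x) \<noteq> (l, u)"
        using e by (auto simp: insert_commute)
      then show ?thesis
        using orientation_arc_iff[OF o] by auto
    qed
  qed
qed

lemma outdeg_Un_le: "outdeg (D \<union> D') v \<le> outdeg D v + outdeg D' v"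
proof -
  have "{w. (v, w) \<in> D \<union> D'} = {w. (v, w) \<in> D} \<union> {w. (v, w) \<in> D'}"
    by blast
  then show ?thesis
    unfolding outdeg_def by (simp add: card_Un_le)
qed

lemma card_le_sum_outdeg:
  assumes sg: "simple_graph V E" and o: "orientation V E D"
  shows "card E \<le> (\<Sum>v\<in>V. outdeg D v)"
proof -
  have fin: "finite V"
    using sg by (rule simple_graph_finite_vertices)
  have DV: "D \<subseteq> V \<times> V"
    using sg o by (rule orientation_subset_Times)
  have "E \<subseteq> (\<lambda>(x, y). {x, y}) ` D"
  proof
    fix e assume "e \<in> E"
    with sg obtain x y where e: "e = {x, y}"
      by (rule simple_graph_edgeE)
    then have "(x, y) \<in> D \<or> (y, x) \<in> D"
      using orientation_arc_iff[OF o, of x y] \<open>e \<in> E\<close> by blast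
    then show "e \<in> (\<lambda>(x, y). {x, y}) ` D"
      unfolding e by (auto simp: image_iff insert_commute)
  qed
  then have "card E \<le> card D"
    using finite_subset[OF DV] fin surj_card_le by blast
  also have "D = Sigma V (\<lambda>v. {w. (v, w) \<in> D})"
    using DV by auto
  also have "card \<dots> = (\<Sum>v\<in>V. outdeg D v)"
    unfolding outdeg_def
  proof (rule card_SigmaI[OF fin])
    show "\<forall>v\<in>V. finite {w. (v, w) \<in> D}"
      using DV fin by (auto intro: finite_subset[of _ V])
  qed
  finally show ?thesis .
qed

lemma orientation_exists_outdeg_ge_2:
  assumes sg: "simple_graph V E" and o: "orientation V E D" and c: "card V < card E"
  shows "\<exists>v\<in>V. 2 \<le> outdeg D v"
proof (rule ccontr)
  assume "\<not> (\<exists>v\<in>V. 2 \<le> outdeg D v)"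
  then have "(\<Sum>v\<in>V. outdeg D v) \<le> (\<Sum>v\<in>V. 1)"
    by (intro sum_mono) auto
  then show False
    using card_le_sum_outdeg[OF sg o] c by simp
qed

lemma orientation_leaf_arcs:
  assumes o: "orientation V T D" and out: "outdeg D l = 1" and l: "nbrs T l = {u}"
  shows "(l, u) \<in> D" "(x, l) \<notin> D"
proof -
  have "{w. (l, w) \<in> D} \<subseteq> {u}"
  proof
    fix w assume "w \<in> {w. (l, w) \<in> D}"
    then have "{l, w} \<in> T"
      using orientation_edge[OF o] by simp
    then show "w \<in> {u}"
      using l mem_nbrs_iff[of w T l] by simp
  qed
  then have "{w. (l, w) \<in> D} = {u}"
    using out unfolding outdeg_def by (auto simp: subset_singleton_iff)
  then show lu: "(l, u) \<in> D"
    by blast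
  show "(x, l) \<notin> D"
  proof
    assume "(x, l) \<in> D"
    then have "{l, x} \<in> T"
      using orientation_edge[OF o \<open>(x, l) \<in> D\<close>] by (simp add: insert_commute)
    then have "x = u"
      using l mem_nbrs_iff[of x T l] by simp
    then show False
      using lu \<open>(x, l) \<in> D\<close> orientation_arc_iff[OF o orientation_edge[OF o lu]] by simp
  qed
qed

lemma is_tree_simple_graph: "is_tree V T \<Longrightarrow> simple_graph V T"
  unfolding is_tree_def by blast

lemma is_tree_adj_rtrancl: "is_tree V T \<Longrightarrow> x \<in> V \<Longrightarrow> y \<in> V \<Longrightarrow> (x, y) \<in> (adj_rel T)\<^sup>*"
  unfolding is_tree_def connected_graph_def by blast

lemma leaf_nbrsE:
  assumes "l \<in> leaves V E"
  obtains u where "nbrs E l = {u}"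
  using assms card_1_singleton_iff[of "nbrs E l"] unfolding leaves_def degree_def by auto

lemma tree_degree_pos:
  assumes t: "is_tree V T" and v: "v \<in> V" and c: "2 \<le> card V"
  shows "0 < degree T v"
proof -
  have fin: "finite V"
    using is_tree_simple_graph[OF t] by (rule simple_graph_finite_vertices)
  obtain w where w: "w \<in> V" "w \<noteq> v"
  proof -
    have "\<not> card V \<le> Suc 0" using c by simp
    then show ?thesis using that v card_le_Suc0_iff_eq[OF fin] by auto
  qed
  obtain z where "(v, z) \<in> adj_rel T"
    using is_tree_adj_rtrancl[OF t v w(1)] w(2) by (blast elim: converse_rtranclE)
  then have "z \<in> nbrs T v"
    by (simp add: adj_rel_iff)
  then show ?thesis
    using finite_nbrs[OF is_tree_simple_graph[OF t]] unfolding degree_def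
    by (auto simp: card_gt_0_iff)
qed

lemma tree_leaves_degree_bound:
  assumes t: "is_tree V T" and deg: "\<forall>v\<in>V - leaves V T. k \<le> degree T v"
  shows "card (leaves V T) + k * (card V - card (leaves V T)) \<le> 2 * card V - 2"
proof -
  let ?L = "leaves V T"
  have sg: "simple_graph V T"
    using t by (rule is_tree_simple_graph)
  have fin: "finite V"
    using sg by (rule simple_graph_finite_vertices)
  have L: "?L \<subseteq> V"
    unfolding leaves_def by blast
  have "card ?L + k * (card V - card ?L) = (\<Sum>v\<in>?L. degree T v) + (\<Sum>v\<in>V - ?L. k)"
    using fin L by (simp add: leaves_def card_Diff_subset finite_subset)
  also have "\<dots> \<le> (\<Sum>v\<in>?L. degree T v) + (\<Sum>v\<in>V - ?L. degree T v)"
    using deg by (intro add_left_mono sum_mono) auto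
  also have "\<dots> = (\<Sum>v\<in>V. degree T v)"
    using sum.subset_diff[OF L fin, of "degree T"] by simp
  also have "\<dots> = 2 * card V - 2"
    using sum_degree_eq_twice_card_edges[OF sg] t unfolding is_tree_def by simp
  finally show ?thesis .
qed

lemma tree_card_leaves_ge_2:
  assumes t: "is_tree V T" and c: "2 \<le> card V"
  shows "2 \<le> card (leaves V T)"
proof -
  have "\<forall>v\<in>V - leaves V T. 2 \<le> degree T v"
    using tree_degree_pos[OF t _ c] unfolding leaves_def by fastforce
  then have "card (leaves V T) + 2 * (card V - card (leaves V T)) \<le> 2 * card V - 2"
    by (rule tree_leaves_degree_bound[OF t])
  moreover have "card (leaves V T) \<le> card V"
    using t by (intro card_mono) (auto simp: leaves_def is_tree_def simple_graph_def)
  ultimately show ?thesis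
    using c by linarith
qed

lemma tree_exists_leaf_neq:
  assumes "is_tree V T" "2 \<le> card V"
  obtains l where "l \<in> leaves V T" "l \<noteq> r"
proof -
  have "\<not> leaves V T \<subseteq> {r}"
    using tree_card_leaves_ge_2[OF assms] card_mono[of "{r}" "leaves V T"] by auto
  then show ?thesis
    using that by blast
qed

lemma tree_adjacent_leaves:
  assumes t: "is_tree V T" and l: "l \<in> V" "nbrs T l = {u}" and u: "nbrs T u = {l}"
  shows "V \<subseteq> {l, u}"
proof
  fix w assume "w \<in> V"
  then have "(l, w) \<in> (adj_rel T)\<^sup>*"
    using is_tree_adj_rtrancl[OF t l(1)] by blast
  then show "w \<in> {l, u}"
    by (induction rule: rtrancl_induct) (use l u in \<open>auto simp: adj_rel_iff\<close>)
qed

lemma nbrs_remove_leaf: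
  assumes "nbrs T l = {u}" "v \<noteq> l"
  shows "nbrs (T - {{l, u}}) v = nbrs T v - {l}"
proof -
  have "{w, l} \<in> T \<Longrightarrow> w = u" for w
    using assms(1) mem_nbrs_iff[of w T l] by (simp add: insert_commute)
  then show ?thesis
    using assms(2) unfolding nbrs_def by (auto simp: doubleton_eq_iff)
qed

lemma adj_rtrancl_remove_leaf:
  assumes l: "nbrs T l = {u}" and p: "(x, y) \<in> (adj_rel T)\<^sup>*" and x: "x \<noteq> l" and y: "y \<noteq> l"
  shows "(x, y) \<in> (adj_rel (T - {{l, u}}))\<^sup>*"
proof -
  have "(y \<noteq> l \<longrightarrow> (x, y) \<in> (adj_rel (T - {{l, u}}))\<^sup>*) \<and>
        (y = l \<longrightarrow> (x, u) \<in> (adj_rel (T - {{l, u}}))\<^sup>*)"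
    using p
  proof (induction rule: rtrancl_induct)
    case base
    then show ?case using x by simp
  next
    case (step y z)
    then have "z \<in> nbrs T y"
      by (simp add: adj_rel_iff)
    then have "z \<noteq> l \<Longrightarrow> y \<noteq> l \<Longrightarrow> (y, z) \<in> adj_rel (T - {{l, u}})"
      and "z = l \<Longrightarrow> y = u" and "y = l \<Longrightarrow> z = u"
      using l nbrs_remove_leaf[OF l, of y] by (auto simp: adj_rel_iff nbrs_sym[of l])
    then show ?case
      using step.IH by (cases "z = l"; cases "y = l") (auto intro: rtrancl_into_rtrancl)
  qed
  then show ?thesis using y by blast
qed

lemma simple_graph_remove_leaf:
  assumes sg: "simple_graph V T" and l: "nbrs T l = {u}"
  shows "simple_graph (V - {l}) (T - {{l, u}})"
  unfolding simple_graph_def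
proof (intro conjI ballI)
  show "finite (V - {l})"
    using simple_graph_finite_vertices[OF sg] by simp
next
  fix e assume e: "e \<in> T - {{l, u}}"
  then have "e \<in> T"
    by simp
  with sg obtain a b where ab: "e = {a, b}" "a \<noteq> b" "a \<in> V" "b \<in> V"
    by (rule simple_graph_edgeE)
  have leaf_edge: "{l, w} \<in> T \<Longrightarrow> w = u" for w
    using l mem_nbrs_iff[of w T l] by simp
  have eT: "{a, b} \<in> T" "{a, b} \<noteq> {l, u}"
    using e ab(1) by auto
  have "a \<noteq> l"
  proof
    assume "a = l"
    then show False using eT leaf_edge[of b] by simp
  qed
  moreover have "b \<noteq> l"
  proof
    assume "b = l"
    then show False using eT leaf_edge[of a] by (simp add: insert_commute)
  qed
  ultimately show "\<exists>a b. e = {a, b} \<and> a \<noteq> b \<and> a \<in> V - {l} \<and> b \<in> V - {l}"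
    using ab by blast
qed

lemma tree_remove_leaf:
  assumes t: "is_tree V T" and l: "nbrs T l = {u}"
  shows "is_tree (V - {l}) (T - {{l, u}})"
proof -
  have sg: "simple_graph V T"
    using t by (rule is_tree_simple_graph)
  have luT: "{l, u} \<in> T"
    using l mem_nbrs_iff[of u T l] by simp
  have ends: "l \<in> V" "u \<in> V" "u \<noteq> l"
    using simple_graph_edge_ends[OF sg luT] by auto
  have "connected_graph (V - {l}) (T - {{l, u}})"
    unfolding connected_graph_def
    using adj_rtrancl_remove_leaf[OF l is_tree_adj_rtrancl[OF t]] by blast
  moreover have "card (T - {{l, u}}) = card (V - {l}) - 1"
    using t luT ends simple_graph_finite_edges[OF sg] simple_graph_finite_vertices[OF sg]
    unfolding is_tree_def by simp
  ultimately show ?thesis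
    using ends simple_graph_remove_leaf[OF sg l] unfolding is_tree_def by blast
qed

definition rooted_orientation :: "'a set \<Rightarrow> 'a set set \<Rightarrow> 'a \<Rightarrow> ('a \<times> 'a) set \<Rightarrow> bool" where
  "rooted_orientation V T r D \<longleftrightarrow> orientation V T D \<and> (\<forall>v. outdeg D v \<le> 1) \<and>
     (\<forall>v\<in>V - {r}. outdeg D v = 1) \<and> (\<exists>\<phi>::'a \<Rightarrow> nat. \<forall>(x, y)\<in>D. \<phi> y < \<phi> x)"

lemma rooted_orientation_insert_leaf:
  assumes sg: "simple_graph (V - {l}) (T - {{l, u}})" and D: "rooted_orientation (V - {l}) (T - {{l, u}}) r D"
    and lu: "{l, u} \<in> T" "u \<noteq> l" and r: "r \<noteq> l"
  shows "rooted_orientation V T r (insert (l, u) D)"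
proof -
  obtain \<phi> :: "'a \<Rightarrow> nat" where \<phi>: "\<forall>(x, y)\<in>D. \<phi> y < \<phi> x"
    using D unfolding rooted_orientation_def by blast
  have avoid: "\<forall>e\<in>T - {{l, u}}. l \<notin> e"
  proof
    fix e assume "e \<in> T - {{l, u}}"
    with sg obtain a b where "e = {a, b}" "a \<in> V - {l}" "b \<in> V - {l}"
      by (rule simple_graph_edgeE)
    then show "l \<notin> e"
      by auto
  qed
  have o: "orientation (V - {l}) (T - {{l, u}}) D"
    using D unfolding rooted_orientation_def by blast
  have arcs: "x \<noteq> l" "y \<noteq> l" if "(x, y) \<in> D" for x y
    using avoid orientation_edge[OF o that] by auto
  then have out: "{w. (v, w) \<in> insert (l, u) D} = (if v = l then {u} else {w. (v, w) \<in> D})" for v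
    by auto
  have "orientation V T (insert (l, u) D)"
    using orientation_insert_pendant[OF o avoid lu(2)] lu(1) by (simp add: insert_absorb)
  moreover have "\<forall>(x, y)\<in>insert (l, u) D. (\<phi>(l := Suc (\<phi> u))) y < (\<phi>(l := Suc (\<phi> u))) x"
    using \<phi> arcs lu(2) by fastforce
  moreover have "\<forall>v. outdeg D v \<le> 1" "\<forall>v\<in>V - {l} - {r}. outdeg D v = 1"
    using D unfolding rooted_orientation_def by auto
  then have "\<forall>v. outdeg (insert (l, u) D) v \<le> 1" "\<forall>v\<in>V - {r}. outdeg (insert (l, u) D) v = 1"
    unfolding outdeg_def out by auto
  ultimately show ?thesis
    unfolding rooted_orientation_def by blast
qed

lemma tree_rooted_orientation:
  assumes "is_tree V T" "r \<in> V"
  shows "\<exists>D. rooted_orientation V T r D"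
  using assms
proof (induction "card V" arbitrary: V T rule: less_induct)
  case less
  have t: "is_tree V T" and r: "r \<in> V"
    using less.prems by auto
  have sg: "simple_graph V T"
    using t by (rule is_tree_simple_graph)
  have fin: "finite V"
    using sg by (rule simple_graph_finite_vertices)
  show ?case
  proof (cases "2 \<le> card V")
    case False
    then have "\<forall>a\<in>V. \<forall>b\<in>V. a = b"
      using card_le_Suc0_iff_eq[OF fin] by simp
    then have "V = {r}"
      using r by blast
    then have "T = {}"
      using t simple_graph_finite_edges[OF sg] unfolding is_tree_def by simp
    then have "rooted_orientation V T r {}"
      using \<open>V = {r}\<close> by (auto simp: rooted_orientation_def orientation_def outdeg_def)
    then show ?thesis ..
  next
    case True
    with t obtain l where lL: "l \<in> leaves V T" and lr: "l \<noteq> r"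
      by (rule tree_exists_leaf_neq)
    obtain u where lu: "nbrs T l = {u}"
      using lL by (rule leaf_nbrsE)
    have luT: "{l, u} \<in> T"
      using lu mem_nbrs_iff[of u T l] by simp
    have ends: "l \<in> V" "u \<noteq> l"
      using simple_graph_edge_ends[OF sg luT] by auto
    have "card (V - {l}) < card V"
      using fin ends(1) by (rule card_Diff1_less)
    moreover have "r \<in> V - {l}"
      using r lr by simp
    ultimately obtain D where "rooted_orientation (V - {l}) (T - {{l, u}}) r D"
      using less.hyps[OF _ tree_remove_leaf[OF t lu]] by blast
    then have "rooted_orientation V T r (insert (l, u) D)"
      using rooted_orientation_insert_leaf[OF simple_graph_remove_leaf[OF sg lu] _ luT ends(2)] lr
      by blast
    then show ?thesis ..
  qed
qed

definition leaf_nbr :: "'a set set \<Rightarrow> 'a \<Rightarrow> 'a" where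
  "leaf_nbr T l = the_elem (nbrs T l)"

lemma nbrs_leaf: "l \<in> leaves V T \<Longrightarrow> nbrs T l = {leaf_nbr T l}"
  by (auto simp: leaf_nbr_def elim: leaf_nbrsE)

lemma leaf_darts:
  assumes "l \<in> leaves V T"
  shows "(l, leaf_nbr T l) \<in> darts T" "(leaf_nbr T l, l) \<in> darts T"
  using nbrs_leaf[OF assms] mem_nbrs_iff[of "leaf_nbr T l" T l]
  by (auto simp: darts_def insert_commute)

lemma tree_leaf_nbr_not_leaf:
  assumes t: "is_tree V T" and c: "3 \<le> card V" and l: "l \<in> leaves V T"
  shows "leaf_nbr T l \<notin> leaves V T"
proof
  let ?u = "leaf_nbr T l"
  assume u: "?u \<in> leaves V T"
  have "l \<in> nbrs T ?u"
    using nbrs_leaf[OF l] nbrs_sym[of l T ?u] by simp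
  then have "nbrs T ?u = {l}"
    using nbrs_leaf[OF u] by simp
  then have "V \<subseteq> {l, ?u}"
    using tree_adjacent_leaves[OF t _ nbrs_leaf[OF l]] l by (simp add: leaves_def)
  then have "card V \<le> 2"
    using card_mono[of "{l, ?u}" V] by (simp add: card_insert_if split: if_splits)
  then show False
    using c by simp
qed

lemma tree_edge_not_two_leaves:
  assumes t: "is_tree V T" and c: "3 \<le> card V" and e: "{a, b} \<in> T" and a: "a \<in> leaves V T"
  shows "b \<notin> leaves V T"
proof -
  have "b = leaf_nbr T a"
    using e nbrs_leaf[OF a] mem_nbrs_iff[of b T a] by simp
  then show ?thesis
    using tree_leaf_nbr_not_leaf[OF t c a] by simp
qed

lemma tree_rooted_orientation_leaves_sources:
  assumes t: "is_tree V T" and c: "3 \<le> card V"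
  shows "\<exists>r D. rooted_orientation V T r D \<and> (\<forall>l\<in>leaves V T. \<forall>x. (x, l) \<notin> D)"
proof -
  have "leaves V T \<noteq> {}"
    using tree_card_leaves_ge_2[OF t] c by auto
  then obtain l0 where l0: "l0 \<in> leaves V T"
    by blast
  let ?r = "leaf_nbr T l0"
  have r: "?r \<in> V" "?r \<notin> leaves V T"
    using nbrs_leaf[OF l0] nbrs_subset[OF is_tree_simple_graph[OF t], of l0]
      tree_leaf_nbr_not_leaf[OF t c l0] by auto
  obtain D where D: "rooted_orientation V T ?r D"
    using tree_rooted_orientation[OF t r(1)] by blast
  have o: "orientation V T D" and out: "\<forall>v\<in>V - {?r}. outdeg D v = 1"
    using D unfolding rooted_orientation_def by blast+
  have "(x, l) \<notin> D" if l: "l \<in> leaves V T" for l x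
  proof -
    have "l \<in> V - {?r}"
      using l r(2) by (auto simp: leaves_def)
    then show ?thesis
      using orientation_leaf_arcs(2)[OF o _ nbrs_leaf[OF l]] out by blast
  qed
  then show ?thesis
    using D by blast
qed

section \<open>Face tracing in plane trees\<close>

lemma rotation_system_bij:
  "rotation_system V T rot \<Longrightarrow> v \<in> V \<Longrightarrow> bij_betw (rot v) (nbrs T v) (nbrs T v)"
  unfolding rotation_system_def by blast

lemma rotation_system_cyclic:
  "rotation_system V T rot \<Longrightarrow> v \<in> V \<Longrightarrow> x \<in> nbrs T v \<Longrightarrow> w \<in> nbrs T v \<Longrightarrow>
   \<exists>k. (rot v ^^ k) x = w"
  unfolding rotation_system_def by blast

lemma rotation_system_in_nbrs:
  "rotation_system V T rot \<Longrightarrow> v \<in> V \<Longrightarrow> x \<in> nbrs T v \<Longrightarrow> rot v x \<in> nbrs T v"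
  using rotation_system_bij bij_betw_apply by fast

lemma rotation_no_fixpoint:
  assumes rs: "rotation_system V T rot" and u: "u \<in> V"
    and l: "l \<in> nbrs T u" and p: "p \<in> nbrs T u" "p \<noteq> l"
  shows "rot u l \<noteq> l"
proof
  assume fixed: "rot u l = l"
  have "(rot u ^^ k) l = l" for k
    by (induction k) (simp_all add: fixed)
  then show False
    using rotation_system_cyclic[OF rs u l p(1)] p(2) by simp
qed

lemma face_succ_into_leaf:
  assumes rs: "rotation_system V T rot" and l: "l \<in> V" "nbrs T l = {u}"
  shows "face_succ rot (u, l) = (l, u)"
  using rotation_system_in_nbrs[OF rs l(1), of u] l(2) by (simp add: face_succ_def)

lemma face_succ_in_darts:
  assumes sg: "simple_graph V T" and rs: "rotation_system V T rot" and d: "d \<in> darts T"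
  shows "face_succ rot d \<in> darts T"
proof -
  obtain x y where xy: "d = (x, y)"
    by fastforce
  then have "x \<in> nbrs T y" "y \<in> V"
    using d simple_graph_edge_ends[OF sg] by (auto simp: darts_def mem_nbrs_iff insert_commute)
  then show ?thesis
    using rotation_system_in_nbrs[OF rs] unfolding xy face_succ_def by (simp add: darts_def mem_nbrs_iff)
qed

lemma funpow_face_succ_in_darts:
  "simple_graph V T \<Longrightarrow> rotation_system V T rot \<Longrightarrow> d \<in> darts T \<Longrightarrow> (face_succ rot ^^ k) d \<in> darts T"
  by (induction k) (simp_all add: face_succ_in_darts)

definition bypass :: "('a \<Rightarrow> 'a) \<Rightarrow> 'a \<Rightarrow> 'a \<Rightarrow> 'a" where
  "bypass r l x = (if r x = l then r l else r x)"

definition remove_from_rotation :: "('a \<Rightarrow> 'a \<Rightarrow> 'a) \<Rightarrow> 'a \<Rightarrow> 'a \<Rightarrow> 'a \<Rightarrow> 'a \<Rightarrow> 'a" where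
  "remove_from_rotation rot u l = rot(u := bypass (rot u) l)"

lemma bij_betw_bypass:
  assumes bij: "bij_betw r N N" and fin: "finite N" and l: "l \<in> N" "r l \<noteq> l"
  shows "bij_betw (bypass r l) (N - {l}) (N - {l})"
proof -
  have inj: "inj_on r N"
    using bij by (rule bij_betw_imp_inj_on)
  have r_in: "r x \<in> N" if "x \<in> N" for x
    using bij that by (rule bij_betw_apply)
  have maps: "bypass r l ` (N - {l}) \<subseteq> N - {l}"
    using r_in l by (auto simp: bypass_def)
  have "inj_on (bypass r l) (N - {l})"
  proof (rule inj_onI)
    fix x y assume x: "x \<in> N - {l}" and y: "y \<in> N - {l}" and eq: "bypass r l x = bypass r l y"
    then have "r x = r y \<or> r x = r l \<or> r l = r y"
      by (auto simp: bypass_def split: if_splits)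
    then show "x = y"
      using x y l(1) inj_on_eq_iff[OF inj] by auto
  qed
  then show ?thesis
    using maps fin by (simp add: bij_betw_def endo_inj_surj)
qed

lemma funpow_bypass_reaches:
  assumes l: "r l \<noteq> l" and x: "x \<noteq> l" and k: "(r ^^ k) x \<noteq> l"
  shows "\<exists>j. (bypass r l ^^ j) x = (r ^^ k) x"
proof -
  \<comment> \<open>the bypassed walk keeps pace with the r-walk, except that it jumps over l\<close>
  have "\<exists>j. (bypass r l ^^ j) x = (if (r ^^ k) x = l then (r ^^ Suc k) x else (r ^^ k) x)" for k
  proof (induction k)
    case 0
    then show ?case
      using x by (intro exI[of _ 0]) simp
  next
    case (Suc k)
    then obtain j where j: "(bypass r l ^^ j) x = (if (r ^^ k) x = l then (r ^^ Suc k) x else (r ^^ k) x)"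
      by blast
    show ?case
    proof (cases "(r ^^ k) x = l")
      case True
      then show ?thesis
        using j l by (intro exI[of _ j]) simp
    next
      case False
      then have "(bypass r l ^^ Suc j) x = bypass r l ((r ^^ k) x)"
        using j by simp
      also have "\<dots> = (if (r ^^ Suc k) x = l then (r ^^ Suc (Suc k)) x else (r ^^ Suc k) x)"
        by (simp add: bypass_def)
      finally show ?thesis ..
    qed
  qed
  then show ?thesis
    using k by metis
qed

lemma rotation_system_remove_leaf:
  assumes rs: "rotation_system V T rot" and sg: "simple_graph V T" and l: "nbrs T l = {u}"
    and p: "p \<in> nbrs T u" "p \<noteq> l"
  shows "rotation_system (V - {l}) (T - {{l, u}}) (remove_from_rotation rot u l)"
  unfolding rotation_system_def
proof (intro ballI)
  fix v assume v: "v \<in> V - {l}"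
  have N: "nbrs (T - {{l, u}}) v = nbrs T v - {l}"
    using nbrs_remove_leaf[OF l] v by simp
  have u: "u \<in> V" and lu: "l \<in> nbrs T u"
    using l nbrs_sym[of l T u] nbrs_subset[OF sg, of l] by auto
  show "bij_betw (remove_from_rotation rot u l v) (nbrs (T - {{l, u}}) v) (nbrs (T - {{l, u}}) v) \<and>
    (\<forall>x\<in>nbrs (T - {{l, u}}) v. \<forall>w\<in>nbrs (T - {{l, u}}) v. \<exists>k. (remove_from_rotation rot u l v ^^ k) x = w)"
  proof (cases "v = u")
    case True
    have moves: "rot u l \<noteq> l"
      by (rule rotation_no_fixpoint[OF rs u lu p])
    have "\<exists>k. (bypass (rot u) l ^^ k) x = w" if "x \<in> nbrs T u - {l}" "w \<in> nbrs T u - {l}" for x w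
      using rotation_system_cyclic[OF rs u, of x w] funpow_bypass_reaches[of "rot u" l x] moves that
      by auto
    then show ?thesis
      using bij_betw_bypass[OF rotation_system_bij[OF rs u] finite_nbrs[OF sg] lu moves] N True
      by (simp add: remove_from_rotation_def)
  next
    case False
    then have "nbrs (T - {{l, u}}) v = nbrs T v"
      using N l nbrs_sym[of l T v] by auto
    then show ?thesis
      using rs v False unfolding rotation_system_def by (simp add: remove_from_rotation_def)
  qed
qed

text \<open>
  After deleting the leaf l from the rotation at its neighbour u, a face-tracing step of the
  smaller tree is either a step of the larger one or the detour (x, u), (u, l), (l, u), (u, rot u l).
\<close>

lemma face_succ_remove_leaf_simulation:
  assumes "rot l u = u"
  shows "\<exists>m. (face_succ rot ^^ m) d = face_succ (remove_from_rotation rot u l) d"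
proof -
  obtain x y where xy: "d = (x, y)"
    by fastforce
  show ?thesis
  proof (cases "y = u \<and> rot u x = l")
    case True
    then have "(face_succ rot ^^ 3) d = face_succ (remove_from_rotation rot u l) d"
      using assms unfolding xy
      by (simp add: numeral_3_eq_3 face_succ_def remove_from_rotation_def bypass_def)
    then show ?thesis ..
  next
    case False
    then have "(face_succ rot ^^ 1) d = face_succ (remove_from_rotation rot u l) d"
      unfolding xy by (auto simp: face_succ_def remove_from_rotation_def bypass_def)
    then show ?thesis ..
  qed
qed

lemma funpow_simulation:
  fixes f g :: "'a \<Rightarrow> 'a"
  assumes "\<forall>x. \<exists>m. (f ^^ m) x = g x"
  shows "\<exists>m. (f ^^ m) x = (g ^^ k) x"
proof (induction k)
  case 0
  have "(f ^^ 0) x = (g ^^ 0) x"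
    by simp
  then show ?case ..
next
  case (Suc k)
  then obtain m where "(f ^^ m) x = (g ^^ k) x"
    by blast
  moreover obtain m' where "(f ^^ m') ((g ^^ k) x) = g ((g ^^ k) x)"
    using assms by blast
  ultimately have "(f ^^ (m' + m)) x = (g ^^ Suc k) x"
    by (simp add: funpow_add)
  then show ?case ..
qed

lemma darts_remove_edge: "d \<in> darts T \<Longrightarrow> d \<notin> {(l, u), (u, l)} \<Longrightarrow> d \<in> darts (T - {{l, u}})"
  unfolding darts_def by (auto simp: doubleton_eq_iff)

lemma face_succ_single_edge:
  assumes t: "is_tree V T" and rs: "rotation_system V T rot"
    and l: "l \<in> V" "nbrs T l = {u}" and u: "nbrs T u = {l}"
    and d: "d \<in> darts T" and d': "d' \<in> darts T"
  shows "\<exists>k. (face_succ rot ^^ k) d = d'"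
proof -
  have sg: "simple_graph V T"
    using t by (rule is_tree_simple_graph)
  have "u \<in> V"
    using l(2) nbrs_subset[OF sg, of l] by blast
  have swap: "face_succ rot (u, l) = (l, u)" "face_succ rot (l, u) = (u, l)"
    by (rule face_succ_into_leaf[OF rs l]) (rule face_succ_into_leaf[OF rs \<open>u \<in> V\<close> u])
  have "darts T \<subseteq> {(l, u), (u, l)}"
  proof
    fix e assume e: "e \<in> darts T"
    obtain x y where xy: "e = (x, y)"
      by fastforce
    then have "{x, y} \<in> T"
      using e by (simp add: darts_def)
    then have "x \<in> {l, u}" "y \<in> nbrs T x"
      using tree_adjacent_leaves[OF t l u] simple_graph_edge_ends(2)[OF sg] by (auto simp: mem_nbrs_iff)
    then show "e \<in> {(l, u), (u, l)}"
      using l(2) u xy by auto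
  qed
  then have dd': "d \<in> {(l, u), (u, l)}" "d' \<in> {(l, u), (u, l)}"
    using d d' by auto
  show ?thesis
  proof (cases "d' = d")
    case True
    then have "(face_succ rot ^^ 0) d = d'"
      by simp
    then show ?thesis ..
  next
    case False
    with dd' have "d' = face_succ rot d"
      by (elim insertE emptyE) (simp_all add: swap)
    then have "(face_succ rot ^^ 1) d = d'"
      by simp
    then show ?thesis ..
  qed
qed

lemma face_succ_enters_remove_leaf:
  assumes sg: "simple_graph V T" and rs: "rotation_system V T rot"
    and l: "nbrs T l = {u}" and p: "p \<in> nbrs T u" "p \<noteq> l" and d: "d \<in> darts T"
  shows "\<exists>k. (face_succ rot ^^ k) d \<in> darts (T - {{l, u}})"
proof -
  have luT: "{l, u} \<in> T"
    using l mem_nbrs_iff[of u T l] by simp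
  have V: "l \<in> V" "u \<in> V" and lu: "l \<in> nbrs T u"
    using simple_graph_edge_ends[OF sg luT] l nbrs_sym[of l T u] by auto
  have moves: "rot u l \<noteq> l"
    by (rule rotation_no_fixpoint[OF rs V(2) lu p])
  have into_T': "(face_succ rot ^^ 1) (l, u) \<in> darts (T - {{l, u}})"
    using rotation_system_in_nbrs[OF rs V(2) lu] moves
    by (intro darts_remove_edge) (auto simp: face_succ_def darts_def mem_nbrs_iff)
  show ?thesis
  proof (cases "d \<in> {(l, u), (u, l)}")
    case True
    moreover have "(face_succ rot ^^ 2) (u, l) = (face_succ rot ^^ 1) (l, u)"
      using face_succ_into_leaf[OF rs V(1) l] by (simp add: numeral_2_eq_2)
    ultimately have "(face_succ rot ^^ 1) d \<in> darts (T - {{l, u}}) \<or>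
                     (face_succ rot ^^ 2) d \<in> darts (T - {{l, u}})"
      using into_T' by auto
    then show ?thesis
      by blast
  next
    case False
    then have "(face_succ rot ^^ 0) d \<in> darts (T - {{l, u}})"
      using d by (simp add: darts_remove_edge)
    then show ?thesis ..
  qed
qed

lemma face_succ_exits_remove_leaf:
  assumes sg: "simple_graph V T" and rs: "rotation_system V T rot"
    and l: "nbrs T l = {u}" and p: "p \<in> nbrs T u" "p \<noteq> l" and d: "d \<in> darts T"
  shows "\<exists>k e. e \<in> darts (T - {{l, u}}) \<and> (face_succ rot ^^ k) e = d"
proof -
  have luT: "{l, u} \<in> T"
    using l mem_nbrs_iff[of u T l] by simp
  have V: "l \<in> V" "u \<in> V" and lu: "l \<in> nbrs T u"
    using simple_graph_edge_ends[OF sg luT] l nbrs_sym[of l T u] by auto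
  have moves: "rot u l \<noteq> l"
    by (rule rotation_no_fixpoint[OF rs V(2) lu p])
  obtain q where q: "q \<in> nbrs T u" "rot u q = l"
    using rotation_system_bij[OF rs V(2)] lu by (metis bij_betw_imp_surj_on imageE)
  then have "q \<noteq> l"
    using moves by auto
  then have qT': "(q, u) \<in> darts (T - {{l, u}})"
    using q(1) by (intro darts_remove_edge) (auto simp: darts_def mem_nbrs_iff insert_commute)
  have "(face_succ rot ^^ 1) (q, u) = (u, l)"
    using q(2) by (simp add: face_succ_def)
  moreover have "(face_succ rot ^^ 2) (q, u) = (l, u)"
    using q(2) face_succ_into_leaf[OF rs V(1) l] by (simp add: numeral_2_eq_2 face_succ_def)
  moreover have "(face_succ rot ^^ 0) d = d"
    by simp
  ultimately have "(face_succ rot ^^ 1) (q, u) = d \<or> (face_succ rot ^^ 2) (q, u) = d \<or>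
                   d \<in> darts (T - {{l, u}}) \<and> (face_succ rot ^^ 0) d = d"
    using darts_remove_edge[OF d, of l u] by auto
  then show ?thesis
    using qT' by blast
qed

lemma face_succ_reaches_remove_leaf:
  assumes sg: "simple_graph V T" and rs: "rotation_system V T rot"
    and l: "nbrs T l = {u}" and p: "p \<in> nbrs T u" "p \<noteq> l"
    and reach': "\<And>e e'. e \<in> darts (T - {{l, u}}) \<Longrightarrow> e' \<in> darts (T - {{l, u}}) \<Longrightarrow>
      \<exists>k. (face_succ (remove_from_rotation rot u l) ^^ k) e = e'"
    and d: "d \<in> darts T" and d': "d' \<in> darts T"
  shows "\<exists>k. (face_succ rot ^^ k) d = d'"
proof -
  let ?f = "face_succ rot" and ?f' = "face_succ (remove_from_rotation rot u l)"
  obtain a where a: "(?f ^^ a) d \<in> darts (T - {{l, u}})"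
    using face_succ_enters_remove_leaf[OF sg rs l p d] by blast
  obtain b e where e: "e \<in> darts (T - {{l, u}})" and b: "(?f ^^ b) e = d'"
    using face_succ_exits_remove_leaf[OF sg rs l p d'] by blast
  obtain k where k: "(?f' ^^ k) ((?f ^^ a) d) = e"
    using reach'[OF a e] by blast
  have "l \<in> V"
    using l simple_graph_edge_ends(2)[OF sg, of l u] mem_nbrs_iff[of u T l] by simp
  then have "rot l u = u"
    using rotation_system_in_nbrs[OF rs, of l u] l by simp
  then have "\<forall>x. \<exists>m. (?f ^^ m) x = ?f' x"
    using face_succ_remove_leaf_simulation[of rot l u] by blast
  then obtain m where "(?f ^^ m) ((?f ^^ a) d) = (?f' ^^ k) ((?f ^^ a) d)"
    using funpow_simulation[of ?f ?f' "(?f ^^ a) d" k] by blast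
  then have "(?f ^^ (b + m + a)) d = d'"
    using b k by (simp add: funpow_add)
  then show ?thesis ..
qed

theorem plane_tree_single_face:
  assumes "is_tree V T" "rotation_system V T rot" "d \<in> darts T" "d' \<in> darts T"
  shows "\<exists>k. (face_succ rot ^^ k) d = d'"
  using assms
proof (induction "card V" arbitrary: V T rot d d' rule: less_induct)
  case less
  have t: "is_tree V T" and rs: "rotation_system V T rot"
    using less.prems by auto
  have sg: "simple_graph V T"
    using t by (rule is_tree_simple_graph)
  obtain x y where "{x, y} \<in> T"
    using less.prems(3) by (auto simp: darts_def)
  then have "2 \<le> card V"
    by (rule simple_graph_card_ge_2[OF sg])
  then have "leaves V T \<noteq> {}"
    using tree_card_leaves_ge_2[OF t] by auto
  then obtain l where lL: "l \<in> leaves V T"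
    by blast
  then have lV: "l \<in> V"
    by (simp add: leaves_def)
  obtain u where lu: "nbrs T l = {u}"
    using lL by (rule leaf_nbrsE)
  show ?case
  proof (cases "nbrs T u = {l}")
    case True
    show ?thesis
      by (rule face_succ_single_edge[OF t rs lV lu True less.prems(3,4)])
  next
    case False
    moreover have "l \<in> nbrs T u"
      using lu nbrs_sym[of l T u] by simp
    ultimately obtain p where p: "p \<in> nbrs T u" "p \<noteq> l"
      by blast
    have "card (V - {l}) < card V"
      using simple_graph_finite_vertices[OF sg] lV by (rule card_Diff1_less)
    then show ?thesis
      using face_succ_reaches_remove_leaf[OF sg rs lu p _ less.prems(3,4)]
        less.hyps[OF _ tree_remove_leaf[OF t lu] rotation_system_remove_leaf[OF rs sg lu p]]
      by blast
  qed
qed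

section \<open>The cyclic order of the leaves of a plane tree\<close>

lemma next_leaf_unique:
  assumes "next_leaf V T rot l m" "next_leaf V T rot l m'"
  shows "m = m'"
proof -
  obtain u k where u: "nbrs T l = {u}" and k: "snd ((face_succ rot ^^ k) (l, u)) = m"
    "m \<in> leaves V T" "\<forall>j<k. snd ((face_succ rot ^^ j) (l, u)) \<notin> leaves V T"
    using assms(1) unfolding next_leaf_def by blast
  obtain k' where k': "snd ((face_succ rot ^^ k') (l, u)) = m'"
    "m' \<in> leaves V T" "\<forall>j<k'. snd ((face_succ rot ^^ j) (l, u)) \<notin> leaves V T"
    using assms(2) u unfolding next_leaf_def by auto
  have "k = k'"
    using k k' by (metis linorder_neqE_nat)
  then show ?thesis
    using k k' by simp
qed

definition leaf_succ :: "'a set \<Rightarrow> 'a set set \<Rightarrow> ('a \<Rightarrow> 'a \<Rightarrow> 'a) \<Rightarrow> 'a \<Rightarrow> 'a" where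
  "leaf_succ V T rot l = (THE m. next_leaf V T rot l m)"

locale plane_tree =
  fixes V :: "'a set" and T :: "'a set set" and rot :: "'a \<Rightarrow> 'a \<Rightarrow> 'a"
  assumes tree: "is_tree V T" and rotation: "rotation_system V T rot"
begin

abbreviation \<sigma> :: "'a \<Rightarrow> 'a" where
  "\<sigma> \<equiv> leaf_succ V T rot"

lemma simple_graph: "simple_graph V T"
  using tree by (rule is_tree_simple_graph)

lemma finite_leaves: "finite (leaves V T)"
  using simple_graph_finite_vertices[OF simple_graph] by (simp add: leaves_def)

lemma card_leaves_le: "card (leaves V T) \<le> card V"
  using simple_graph_finite_vertices[OF simple_graph] by (intro card_mono) (auto simp: leaves_def)

lemma next_leaf_exists:
  assumes l: "l \<in> leaves V T"
  shows "\<exists>m. next_leaf V T rot l m"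
proof -
  let ?walk = "\<lambda>k. (face_succ rot ^^ k) (l, leaf_nbr T l)"
  obtain k where "?walk k = (leaf_nbr T l, l)"
    using plane_tree_single_face[OF tree rotation leaf_darts[OF l]] by blast
  then have "\<exists>k. snd (?walk k) \<in> leaves V T"
    using l by (metis snd_conv)
  then have "snd (?walk (LEAST k. snd (?walk k) \<in> leaves V T)) \<in> leaves V T"
    "\<forall>j < (LEAST k. snd (?walk k) \<in> leaves V T). snd (?walk j) \<notin> leaves V T"
    by (auto intro: LeastI_ex dest: not_less_Least)
  then show ?thesis
    using l nbrs_leaf[OF l] unfolding next_leaf_def by blast
qed

lemma next_leaf_leaf_succ: "l \<in> leaves V T \<Longrightarrow> next_leaf V T rot l (\<sigma> l)"
  unfolding leaf_succ_def using next_leaf_exists next_leaf_unique by (metis theI)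

lemma next_leaf_iff: "next_leaf V T rot l m \<longleftrightarrow> l \<in> leaves V T \<and> m = \<sigma> l"
  using next_leaf_leaf_succ next_leaf_unique unfolding next_leaf_def by metis

lemma leaf_succ_in_leaves: "l \<in> leaves V T \<Longrightarrow> \<sigma> l \<in> leaves V T"
  using next_leaf_leaf_succ unfolding next_leaf_def by blast

lemma face_succ_walk_to_leaf_succ:
  assumes l: "l \<in> leaves V T"
  obtains k where "(face_succ rot ^^ k) (l, leaf_nbr T l) = (leaf_nbr T (\<sigma> l), \<sigma> l)"
    and "\<forall>j<k. snd ((face_succ rot ^^ j) (l, leaf_nbr T l)) \<notin> leaves V T"
proof -
  obtain k where k: "snd ((face_succ rot ^^ k) (l, leaf_nbr T l)) = \<sigma> l"
    "\<forall>j<k. snd ((face_succ rot ^^ j) (l, leaf_nbr T l)) \<notin> leaves V T"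
    using next_leaf_leaf_succ[OF l] nbrs_leaf[OF l] unfolding next_leaf_def by auto
  obtain x where x: "(face_succ rot ^^ k) (l, leaf_nbr T l) = (x, \<sigma> l)"
    using k(1) by (metis prod.collapse)
  then have "(x, \<sigma> l) \<in> darts T"
    using funpow_face_succ_in_darts[OF simple_graph rotation leaf_darts(1)[OF l]] by metis
  then have "x = leaf_nbr T (\<sigma> l)"
    using nbrs_leaf[OF leaf_succ_in_leaves[OF l]] mem_nbrs_iff[of x T "\<sigma> l"]
    by (simp add: darts_def insert_commute)
  then show ?thesis
    using that x k(2) by blast
qed

lemma face_succ_walk_passes_leaf_succ:
  assumes l: "l \<in> leaves V T" and m: "m \<in> leaves V T"
    and walk: "(face_succ rot ^^ k) (l, leaf_nbr T l) = (leaf_nbr T m, m)"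
  shows "m = \<sigma> l \<or> (\<exists>i<k. (face_succ rot ^^ i) (\<sigma> l, leaf_nbr T (\<sigma> l)) = (leaf_nbr T m, m))"
proof -
  let ?f = "face_succ rot"
  obtain k0 where k0: "(?f ^^ k0) (l, leaf_nbr T l) = (leaf_nbr T (\<sigma> l), \<sigma> l)"
    and first: "\<forall>j<k0. snd ((?f ^^ j) (l, leaf_nbr T l)) \<notin> leaves V T"
    using face_succ_walk_to_leaf_succ[OF l] by blast
  have "\<not> k < k0"
  proof
    assume "k < k0"
    then have "snd ((?f ^^ k) (l, leaf_nbr T l)) \<notin> leaves V T"
      using first by blast
    then show False
      using walk m by simp
  qed
  then consider "k = k0" | i where "k = i + Suc k0"
    using less_iff_Suc_add[of k0 k] by auto
  then show ?thesis
  proof cases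
    case 1
    then show ?thesis
      using walk k0 by simp
  next
    case (2 i)
    have sl: "\<sigma> l \<in> leaves V T"
      using leaf_succ_in_leaves[OF l] .
    have "?f (leaf_nbr T (\<sigma> l), \<sigma> l) = (\<sigma> l, leaf_nbr T (\<sigma> l))"
      using face_succ_into_leaf[OF rotation _ nbrs_leaf[OF sl]] sl by (simp add: leaves_def)
    then have "(?f ^^ Suc k0) (l, leaf_nbr T l) = (\<sigma> l, leaf_nbr T (\<sigma> l))"
      using k0 by simp
    then have "(?f ^^ i) (\<sigma> l, leaf_nbr T (\<sigma> l)) = (leaf_nbr T m, m)"
      using walk unfolding 2 funpow_add comp_apply by simp
    then show ?thesis
      using 2 by auto
  qed
qed

lemma leaf_succ_reaches:
  assumes l: "l \<in> leaves V T" and m: "m \<in> leaves V T"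
  shows "\<exists>j. (\<sigma> ^^ j) l = m"
proof -
  have "\<exists>j. (\<sigma> ^^ j) l = m"
    if "l \<in> leaves V T" "(face_succ rot ^^ k) (l, leaf_nbr T l) = (leaf_nbr T m, m)" for k l
    using that
  proof (induction k arbitrary: l rule: less_induct)
    case (less k)
    from face_succ_walk_passes_leaf_succ[OF less.prems(1) m less.prems(2)] show ?case
    proof
      assume "m = \<sigma> l"
      then have "(\<sigma> ^^ 1) l = m"
        by simp
      then show ?thesis ..
    next
      assume "\<exists>i<k. (face_succ rot ^^ i) (\<sigma> l, leaf_nbr T (\<sigma> l)) = (leaf_nbr T m, m)"
      then obtain j where "(\<sigma> ^^ j) (\<sigma> l) = m"
        using less.IH leaf_succ_in_leaves[OF less.prems(1)] by blast
      then have "(\<sigma> ^^ Suc j) l = m"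
        by (simp add: funpow_Suc_right del: funpow.simps)
      then show ?thesis ..
    qed
  qed
  moreover obtain k where "(face_succ rot ^^ k) (l, leaf_nbr T l) = (leaf_nbr T m, m)"
    using plane_tree_single_face[OF tree rotation leaf_darts(1)[OF l] leaf_darts(2)[OF m]] by blast
  ultimately show ?thesis
    using l by blast
qed

lemma exists_leaf_notin:
  assumes "finite A" "card A < card (leaves V T)"
  obtains m where "m \<in> leaves V T" "m \<notin> A"
  using assms card_mono[OF assms(1), of "leaves V T"] by force

lemma leaf_succ_neq:
  assumes l: "l \<in> leaves V T"
  shows "\<sigma> l \<noteq> l"
proof
  assume fixed: "\<sigma> l = l"
  have "2 \<le> card V"
    using simple_graph_card_ge_2[OF simple_graph] leaf_darts(1)[OF l] by (simp add: darts_def)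
  then obtain m where m: "m \<in> leaves V T" "m \<notin> {l}"
    using tree_card_leaves_ge_2[OF tree] exists_leaf_notin[of "{l}"] by force
  have "(\<sigma> ^^ j) l = l" for j
    by (induction j) (simp_all add: fixed)
  then show False
    using leaf_succ_reaches[OF l m(1)] m(2) by auto
qed

lemma leaf_succ_leaf_succ_neq:
  assumes three: "3 \<le> card (leaves V T)" and l: "l \<in> leaves V T"
  shows "\<sigma> (\<sigma> l) \<noteq> l"
proof
  assume two_cycle: "\<sigma> (\<sigma> l) = l"
  have orbit: "(\<sigma> ^^ j) l \<in> {l, \<sigma> l}" for j
    by (induction j) (auto simp: two_cycle)
  obtain m where m: "m \<in> leaves V T" "m \<notin> {l, \<sigma> l}"
  proof (rule exists_leaf_notin)
    show "card {l, \<sigma> l} < card (leaves V T)"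
      using three by (simp add: card_insert_if)
  qed simp
  then show False
    using leaf_succ_reaches[OF l m(1)] orbit by metis
qed

lemma bij_leaf_succ:
  assumes three: "3 \<le> card (leaves V T)"
  shows "bij_betw \<sigma> (leaves V T) (leaves V T)"
proof -
  have "leaves V T \<subseteq> \<sigma> ` leaves V T"
  proof
    fix m assume m: "m \<in> leaves V T"
    obtain l where l: "l \<in> leaves V T" "l \<notin> {m}"
      using three exists_leaf_notin[of "{m}"] by force
    obtain j where j: "(\<sigma> ^^ j) l = m"
      using leaf_succ_reaches[OF l(1) m] by blast
    then obtain i where "j = Suc i"
      using l(2) by (cases j) auto
    then have "m = \<sigma> ((\<sigma> ^^ i) l)"
      using j by simp
    moreover have "(\<sigma> ^^ i) l \<in> leaves V T"
      using l(1) by (induction i) (simp_all add: leaf_succ_in_leaves)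
    ultimately show "m \<in> \<sigma> ` leaves V T"
      by blast
  qed
  then have "\<sigma> ` leaves V T = leaves V T"
    using leaf_succ_in_leaves by auto
  then show ?thesis
    using finite_leaves by (simp add: bij_betw_def eq_card_imp_inj_on)
qed

lemma outer_cycle_edges_eq: "outer_cycle_edges V T rot = (\<lambda>l. {l, \<sigma> l}) ` leaves V T"
  unfolding outer_cycle_edges_def next_leaf_iff by auto

end

section \<open>Eulerian subdigraphs\<close>

lemma eulerian_out_arc:
  assumes fin: "finite S" and eu: "\<forall>v. indeg S v = outdeg S v" and xy: "(x, y) \<in> S"
  shows "\<exists>z. (y, z) \<in> S"
proof -
  have "finite {w. (w, y) \<in> S}"
    using fin by (rule finite_subset[rotated, OF finite_imageI[of _ fst]]) force
  then have "0 < indeg S y"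
    using xy unfolding indeg_def by (auto simp: card_gt_0_iff)
  then have "{z. (y, z) \<in> S} \<noteq> {}"
    using eu unfolding outdeg_def by (metis card.empty less_irrefl)
  then show ?thesis
    by blast
qed

lemma eulerian_sub_subset_of_potential:
  fixes \<phi> :: "'a \<Rightarrow> nat"
  assumes fin: "finite D" and S: "eulerian_sub D S" and D: "D \<subseteq> A \<union> C"
    and dec: "\<forall>(x, y)\<in>A. \<phi> y < \<phi> x" and sep: "\<forall>(x, y)\<in>A. \<forall>z. (y, z) \<notin> C"
  shows "S \<subseteq> C"
proof (rule ccontr)
  have SD: "S \<subseteq> D" and eu: "\<forall>v. indeg S v = outdeg S v"
    using S unfolding eulerian_sub_def by auto
  assume "\<not> S \<subseteq> C"
  then have "S \<inter> A \<noteq> {}"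
    using SD D by blast
  then obtain x y where xy: "(x, y) \<in> S \<inter> A" and min: "\<forall>(x', y')\<in>S \<inter> A. \<phi> y \<le> \<phi> y'"
    using ex_has_least_nat[of "\<lambda>a. a \<in> S \<inter> A" _ "\<lambda>a. \<phi> (snd a)"] by fastforce
  obtain z where z: "(y, z) \<in> S"
    using eulerian_out_arc[OF finite_subset[OF SD fin] eu] xy by blast
  show False
  proof (cases "(y, z) \<in> A")
    case True
    then have "\<phi> z < \<phi> y" "\<phi> y \<le> \<phi> z"
      using dec min z by auto
    then show False
      by simp
  next
    case False
    then show False
      using z SD D sep xy by blast
  qed
qed

lemma eulerian_sub_of_cycle:
  assumes S: "eulerian_sub D S" and fin: "finite D"
    and cyc: "S \<subseteq> (\<lambda>l. (l, \<sigma> l)) ` L" and reach: "\<forall>l\<in>L. \<forall>m\<in>L. \<exists>j. (\<sigma> ^^ j) l = m"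
  shows "S = {} \<or> S = (\<lambda>l. (l, \<sigma> l)) ` L"
proof (cases "S = {}")
  case False
  then obtain l where l: "l \<in> L" "(l, \<sigma> l) \<in> S"
    using cyc by blast
  have fS: "finite S" and eu: "\<forall>v. indeg S v = outdeg S v"
    using S fin unfolding eulerian_sub_def by (auto intro: finite_subset)
  have iter: "((\<sigma> ^^ j) l, \<sigma> ((\<sigma> ^^ j) l)) \<in> S" for j
  proof (induction j)
    case 0
    then show ?case using l by simp
  next
    case (Suc j)
    then obtain z where "(\<sigma> ((\<sigma> ^^ j) l), z) \<in> S"
      using eulerian_out_arc[OF fS eu] by blast
    moreover from this have "z = \<sigma> (\<sigma> ((\<sigma> ^^ j) l))"
      using cyc by auto
    ultimately show ?case
      by simp
  qed
  have "(\<lambda>l. (l, \<sigma> l)) ` L \<subseteq> S"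
    using iter reach l(1) by fastforce
  then show ?thesis
    using cyc by blast
qed simp

lemma eulerian_sub_cycle:
  assumes bij: "bij_betw \<sigma> L L" and sub: "(\<lambda>l. (l, \<sigma> l)) ` L \<subseteq> D"
  shows "eulerian_sub D ((\<lambda>l. (l, \<sigma> l)) ` L)"
  unfolding eulerian_sub_def
proof (intro conjI allI sub)
  fix v
  have "{w. (w, v) \<in> (\<lambda>l. (l, \<sigma> l)) ` L} = {w \<in> L. \<sigma> w = v}"
    "{w. (v, w) \<in> (\<lambda>l. (l, \<sigma> l)) ` L} = (if v \<in> L then {\<sigma> v} else {})"
    by auto
  moreover have "card {w \<in> L. \<sigma> w = v} = (if v \<in> L then 1 else 0)"
  proof (cases "v \<in> L")
    case True
    then obtain w where "w \<in> L" "\<sigma> w = v"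
      using bij by (metis bij_betw_imp_surj_on imageE)
    then have "{w \<in> L. \<sigma> w = v} = {w}"
      using bij by (auto simp: bij_betw_def inj_on_def)
    then show ?thesis
      using True by simp
  next
    case False
    then have "{w \<in> L. \<sigma> w = v} = {}"
      using bij by (auto simp: bij_betw_def)
    then have "card {w \<in> L. \<sigma> w = v} = 0"
      by (simp only: card.empty)
    then show ?thesis
      using False by simp
  qed
  ultimately show "indeg ((\<lambda>l. (l, \<sigma> l)) ` L) v = outdeg ((\<lambda>l. (l, \<sigma> l)) ` L) v"
    unfolding indeg_def outdeg_def by simp
qed

lemma eulerian_sub_acyclic_plus_cycle:
  fixes \<phi> :: "'a \<Rightarrow> nat"
  assumes fin: "finite A" "finite L"
    and dec: "\<forall>(x, y)\<in>A. \<phi> y < \<phi> x" and into: "\<forall>(x, y)\<in>A. y \<notin> L"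
    and bij: "bij_betw \<sigma> L L" and reach: "\<forall>l\<in>L. \<forall>m\<in>L. \<exists>j. (\<sigma> ^^ j) l = m"
  shows "eulerian_sub (A \<union> (\<lambda>l. (l, \<sigma> l)) ` L) S \<longleftrightarrow> S = {} \<or> S = (\<lambda>l. (l, \<sigma> l)) ` L"
proof
  let ?C = "(\<lambda>l. (l, \<sigma> l)) ` L"
  assume S: "eulerian_sub (A \<union> ?C) S"
  have "finite (A \<union> ?C)"
    using fin by simp
  moreover from this have "S \<subseteq> ?C"
    using eulerian_sub_subset_of_potential[OF _ S _ dec] into by blast
  ultimately show "S = {} \<or> S = ?C"
    using eulerian_sub_of_cycle[OF S] reach by blast
next
  assume "S = {} \<or> S = (\<lambda>l. (l, \<sigma> l)) ` L"
  then show "eulerian_sub (A \<union> (\<lambda>l. (l, \<sigma> l)) ` L) S"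
    using eulerian_sub_cycle[OF bij] by (auto simp: eulerian_sub_def indeg_def outdeg_def)
qed

lemma eulerian_counts_of_single_cycle:
  assumes eu: "\<And>S. eulerian_sub D S \<longleftrightarrow> S = {} \<or> S = C" and "C \<noteq> {}" and "even (card C)"
  shows "even_eulerian D = 2" "odd_eulerian D = 0"
proof -
  have "{S. eulerian_sub D S \<and> even (card S)} = {{}, C}"
    unfolding eu using assms(3) by auto
  then show "even_eulerian D = 2"
    unfolding even_eulerian_def using assms(2) by simp
  have "{S. eulerian_sub D S \<and> odd (card S)} = {}"
    unfolding eu using assms(3) by auto
  then show "odd_eulerian D = 0"
    unfolding odd_eulerian_def by (simp only: card.empty)
qed

lemma halin_tree_plane_tree: "halin_tree V T rot \<Longrightarrow> plane_tree V T rot"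
  unfolding halin_tree_def plane_tree_def by blast

lemma halin_card_leaves_ge_3:
  assumes h: "halin_tree V T rot"
  shows "3 \<le> card (leaves V T)"
proof -
  have t: "is_tree V T"
    using h by (simp add: halin_tree_def)
  have sg: "simple_graph V T"
    using t by (rule is_tree_simple_graph)
  have fin: "finite V"
    using sg by (rule simple_graph_finite_vertices)
  obtain v where v: "v \<in> V" "3 \<le> degree T v"
    using h by (auto simp: halin_tree_def)
  have "card (insert v (nbrs T v)) = Suc (degree T v)"
    using finite_nbrs[OF sg] self_notin_nbrs[OF sg] by (simp add: degree_def)
  moreover have "card (insert v (nbrs T v)) \<le> card V"
    using fin v(1) nbrs_subset[OF sg] by (intro card_mono) auto
  ultimately have c: "4 \<le> card V"
    using v(2) by simp
  have "3 \<le> degree T w" if w: "w \<in> V - leaves V T" for w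
  proof -
    have "degree T w \<noteq> 1" "degree T w \<noteq> 2" "0 < degree T w"
      using w h tree_degree_pos[OF t, of w] c by (auto simp: halin_tree_def leaves_def)
    then show ?thesis
      by linarith
  qed
  then have "card (leaves V T) + 3 * (card V - card (leaves V T)) \<le> 2 * card V - 2"
    by (intro tree_leaves_degree_bound[OF t]) auto
  moreover have "card (leaves V T) \<le> card V"
    using fin by (intro card_mono) (auto simp: leaves_def)
  ultimately show ?thesis
    using c by linarith
qed

context plane_tree
begin

lemma simple_graph_halin_edges: "simple_graph V (halin_edges V T rot)"
  unfolding simple_graph_def halin_edges_def outer_cycle_edges_eq
proof (intro conjI ballI)
  show "finite V"
    using simple_graph by (rule simple_graph_finite_vertices)
next
  fix e assume "e \<in> T \<union> (\<lambda>l. {l, \<sigma> l}) ` leaves V T"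
  then show "\<exists>u v. e = {u, v} \<and> u \<noteq> v \<and> u \<in> V \<and> v \<in> V"
  proof
    assume "e \<in> T"
    with simple_graph obtain u v where "e = {u, v}" "u \<noteq> v" "u \<in> V" "v \<in> V"
      by (rule simple_graph_edgeE)
    then show ?thesis
      by blast
  next
    assume "e \<in> (\<lambda>l. {l, \<sigma> l}) ` leaves V T"
    then obtain l where "l \<in> leaves V T" "e = {l, \<sigma> l}"
      by blast
    then show ?thesis
      using leaf_succ_neq leaf_succ_in_leaves by (auto simp: leaves_def)
  qed
qed

lemma outer_cycle_edges_disjoint:
  assumes three: "3 \<le> card (leaves V T)"
  shows "T \<inter> outer_cycle_edges V T rot = {}"
proof -
  have "3 \<le> card V"
    using three card_leaves_le by simp
  then show ?thesis
    using tree_edge_not_two_leaves[OF tree] leaf_succ_in_leaves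
    unfolding outer_cycle_edges_eq by blast
qed

lemma card_halin_edges:
  assumes three: "3 \<le> card (leaves V T)"
  shows "card (halin_edges V T rot) = card V - 1 + card (leaves V T)"
proof -
  note disj = outer_cycle_edges_disjoint[OF three]
  have "inj_on (\<lambda>l. {l, \<sigma> l}) (leaves V T)"
  proof (rule inj_onI)
    fix l m assume l: "l \<in> leaves V T" and m: "m \<in> leaves V T" and "{l, \<sigma> l} = {m, \<sigma> m}"
    then have "l = m \<or> l = \<sigma> m \<and> \<sigma> l = m"
      by (auto simp: doubleton_eq_iff)
    then show "l = m"
      using leaf_succ_leaf_succ_neq[OF three m] by auto
  qed
  then have "card (outer_cycle_edges V T rot) = card (leaves V T)"
    unfolding outer_cycle_edges_eq by (rule card_image)
  moreover have "finite (outer_cycle_edges V T rot)"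
    unfolding outer_cycle_edges_eq using finite_leaves by simp
  ultimately show ?thesis
    using tree card_Un_disjoint[OF simple_graph_finite_edges[OF simple_graph] _ disj]
    unfolding halin_edges_def is_tree_def by simp
qed

lemma halin_orientation_outdeg_ge_2:
  assumes three: "3 \<le> card (leaves V T)" and o: "orientation V (halin_edges V T rot) D"
  shows "\<exists>v\<in>V. 2 \<le> outdeg D v"
proof (rule orientation_exists_outdeg_ge_2[OF simple_graph_halin_edges o])
  show "card V < card (halin_edges V T rot)"
    using card_halin_edges[OF three] three by simp
qed

lemma halin_orientation_separates_eulerian:
  assumes three: "3 \<le> card (leaves V T)" and even: "even (card (leaves V T))"
  shows "\<exists>D. orientation V (halin_edges V T rot) D \<and> (\<forall>v. outdeg D v \<le> 2) \<and>
             even_eulerian D \<noteq> odd_eulerian D"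
proof -
  let ?L = "leaves V T"
  let ?C = "(\<lambda>l. (l, \<sigma> l)) ` ?L"
  have "3 \<le> card V"
    using three card_leaves_le by simp
  then obtain r A where rA: "rooted_orientation V T r A" and src: "\<forall>l\<in>?L. \<forall>x. (x, l) \<notin> A"
    using tree_rooted_orientation_leaves_sources[OF tree] by blast
  obtain \<phi> :: "'a \<Rightarrow> nat" where dec: "\<forall>(x, y)\<in>A. \<phi> y < \<phi> x"
    using rA unfolding rooted_orientation_def by auto
  have A: "orientation V T A" "\<forall>v. outdeg A v \<le> 1"
    using rA unfolding rooted_orientation_def by simp_all
  have "orientation V (outer_cycle_edges V T rot) ?C"
    unfolding outer_cycle_edges_eq
    using leaf_succ_in_leaves leaf_succ_leaf_succ_neq[OF three] by (intro orientation_cycle) blast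
  then have o: "orientation V (halin_edges V T rot) (A \<union> ?C)"
    unfolding halin_edges_def by (rule orientation_Un[OF A(1) _ outer_cycle_edges_disjoint[OF three]])
  have C_out: "outdeg ?C v \<le> 1" for v
    unfolding outdeg_def using card_mono[of "{\<sigma> v}" "{w. (v, w) \<in> ?C}"] by force
  have "outdeg (A \<union> ?C) v \<le> 2" for v
    using A(2)[rule_format, of v] C_out[of v] outdeg_Un_le[of A ?C v] by linarith
  moreover have "finite A"
    using orientation_subset_Times[OF simple_graph A(1)] simple_graph_finite_vertices[OF simple_graph]
    by (simp add: finite_subset)
  moreover have "\<forall>(x, y)\<in>A. y \<notin> ?L" "\<forall>l\<in>?L. \<forall>m\<in>?L. \<exists>j. (\<sigma> ^^ j) l = m"
    using src leaf_succ_reaches by auto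
  then have "eulerian_sub (A \<union> ?C) S \<longleftrightarrow> S = {} \<or> S = ?C" for S
    using eulerian_sub_acyclic_plus_cycle[OF \<open>finite A\<close> finite_leaves dec _ bij_leaf_succ[OF three]]
    by blast
  moreover have "card ?C = card ?L" "?C \<noteq> {}"
    using three by (auto simp: card_image inj_on_def)
  ultimately show ?thesis
    using o eulerian_counts_of_single_cycle[of "A \<union> ?C" ?C] even by auto
qed

end

theorem lemma3p4:
  fixes V :: "'a set" and T :: "'a set set" and rot :: "'a \<Rightarrow> 'a \<Rightarrow> 'a"
  assumes "halin_tree V T rot"
    and "even (card (leaves V T))"
  shows "AT_number V (halin_edges V T rot) = 3"
proof -
  interpret plane_tree V T rot
    using assms(1) by (rule halin_tree_plane_tree)
  have three: "3 \<le> card (leaves V T)"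
    using assms(1) by (rule halin_card_leaves_ge_3)
  show ?thesis
    unfolding AT_number_def
  proof (rule Least_equality)
    show "\<exists>D. orientation V (halin_edges V T rot) D \<and> (\<forall>v\<in>V. outdeg D v + 1 \<le> 3) \<and>
              even_eulerian D \<noteq> odd_eulerian D"
      using halin_orientation_separates_eulerian[OF three assms(2)] by fastforce
  next
    fix k
    assume "\<exists>D. orientation V (halin_edges V T rot) D \<and> (\<forall>v\<in>V. outdeg D v + 1 \<le> k) \<and>
              even_eulerian D \<noteq> odd_eulerian D"
    then obtain D where D: "orientation V (halin_edges V T rot) D" "\<forall>v\<in>V. outdeg D v + 1 \<le> k"
      by blast
    obtain v where "v \<in> V" "2 \<le> outdeg D v"
      using halin_orientation_outdeg_ge_2[OF three D(1)] by blast
    then show "3 \<le> k"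
      using D(2) by fastforce
  qed
qed

end
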